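(* Let $n\ge2$ and let $M,S,L\subset\mathbb{R}^n$ be the sets of mixed, split and level points. Then there exists a homeomorphism $g:\mathbb{R}^n\to L\times\mathbb{R}$ with $g(M)=L\times(-\infty,0)$ and $g(S)=L\times(0,+\infty)$. In particular $\overline{M}\cap\overline{S}=L$.
   Context: Write $[n]=\{1,\dots,n\}$. For $x\in\mathbb{R}^n$ let $t(x)=\min\{x_k-x_{k'}: k\in[n]\text{ odd},\ k'\in[n]\text{ even}\}$. The point $x$ is mixed, level or split according as $t(x)<0$, $t(x)=0$ or $t(x)>0$; $M$, $L$, $S$ denote the sets of mixed, level and split points in $\mathbb{R}^n$. *)

theory Defs
  imports "HOL-Analysis.Analysis"
begin

text \<open>R^n is modelled as the functions nat => real supported in {1..n}, carrying the
  subspace topology of the product topology on nat => real (which restricts to the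
  Euclidean topology).\<close>

definition Rn :: "nat \<Rightarrow> (nat \<Rightarrow> real) set" where
  "Rn n = {x. \<forall>k. k \<notin> {1..n} \<longrightarrow> x k = 0}"

definition tval :: "nat \<Rightarrow> (nat \<Rightarrow> real) \<Rightarrow> real" where
  "tval n x = Min {x k - x k' | k k'. k \<in> {1..n} \<and> odd k \<and> k' \<in> {1..n} \<and> even k'}"

definition mixed_pts :: "nat \<Rightarrow> (nat \<Rightarrow> real) set" where
  "mixed_pts n = {x \<in> Rn n. tval n x < 0}"

definition level_pts :: "nat \<Rightarrow> (nat \<Rightarrow> real) set" where
  "level_pts n = {x \<in> Rn n. tval n x = 0}"

definition split_pts :: "nat \<Rightarrow> (nat \<Rightarrow> real) set" where
  "split_pts n = {x \<in> Rn n. tval n x > 0}"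

end

theory Submission
  imports Defs
begin

text \<open>
  Let e be the indicator vector of the odd coordinates in {1..n}.
  Adding c e to a point x raises every difference x k - x k' (k odd, k' even) by c,
  hence t(x + c e) = t(x) + c.  So the translations along e form a continuous flow on
  R^n along which the height t increases with unit speed, and every such flow
  trivializes the space as (zero level of t) \<times> R via  x \<mapsto> (x - t(x) e, t(x)).
  Under this homeomorphism the sets t < 0 and t > 0 become L \<times> (-\<infinity>,0) and
  L \<times> (0,\<infinity>).  The closures of t < 0 and t > 0 meet exactly in t = 0: they lie in the
  closed sets t \<le> 0 and t \<ge> 0, and every level point is the limit of its flow line
  from either side.
\<close>

locale unit_speed_flow =
  fixes S :: "'a::topological_space set"
    and flow :: "'a \<Rightarrow> real \<Rightarrow> 'a"
    and height :: "'a \<Rightarrow> real"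
  assumes flow_continuous: "continuous_on (S \<times> UNIV) (\<lambda>(x, t). flow x t)"
    and height_continuous: "continuous_on S height"
    and flow_in: "x \<in> S \<Longrightarrow> flow x t \<in> S"
    and flow_zero: "x \<in> S \<Longrightarrow> flow x 0 = x"
    and flow_add: "x \<in> S \<Longrightarrow> flow (flow x s) t = flow x (s + t)"
    and height_flow: "x \<in> S \<Longrightarrow> height (flow x t) = height x + t"
begin

definition projection :: "'a \<Rightarrow> 'a" where
  "projection x = flow x (- height x)"

lemma projection_in_level:
  assumes "x \<in> S"
  shows "projection x \<in> S" "height (projection x) = 0"
  using assms by (simp_all add: projection_def flow_in height_flow)

lemma flow_projection:
  assumes "x \<in> S"
  shows "flow (projection x) (height x) = x"
  using assms by (simp add: projection_def flow_add flow_zero)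

lemma projection_flow:
  assumes "y \<in> S" "height y = 0"
  shows "projection (flow y t) = y"
  using assms by (simp add: projection_def height_flow flow_add flow_zero)

lemma projection_continuous: "continuous_on S projection"
proof -
  have "continuous_on S (\<lambda>x. (x, - height x))"
    by (intro continuous_intros height_continuous)
  moreover have "(\<lambda>x. (x, - height x)) ` S \<subseteq> S \<times> UNIV"
    by auto
  ultimately show ?thesis
    unfolding projection_def
    using continuous_on_compose2[OF flow_continuous] by fastforce
qed

lemma trivialization:
  "homeomorphism S ({x \<in> S. height x = 0} \<times> UNIV)
     (\<lambda>x. (projection x, height x)) (\<lambda>(y, t). flow y t)"
proof (rule homeomorphismI)
  show "continuous_on S (\<lambda>x. (projection x, height x))"
    by (intro continuous_on_Pair projection_continuous height_continuous)
  show "continuous_on ({x \<in> S. height x = 0} \<times> UNIV) (\<lambda>(y, t). flow y t)"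
    by (rule continuous_on_subset[OF flow_continuous]) auto
qed (auto simp: projection_in_level flow_projection projection_flow flow_in height_flow)

lemma trivialization_image:
  "(\<lambda>x. (projection x, height x)) ` {x \<in> S. P (height x)}
     = {x \<in> S. height x = 0} \<times> {t. P t}"
proof (intro equalityI subsetI)
  fix p assume "p \<in> (\<lambda>x. (projection x, height x)) ` {x \<in> S. P (height x)}"
  then show "p \<in> {x \<in> S. height x = 0} \<times> {t. P t}"
    by (auto simp: projection_in_level)
next
  fix p assume "p \<in> {x \<in> S. height x = 0} \<times> {t. P t}"
  then obtain y t where p: "p = (y, t)" "y \<in> S" "height y = 0" "P t"
    by auto
  then have "flow y t \<in> {x \<in> S. P (height x)}"
    by (simp add: flow_in height_flow)
  moreover have "(projection (flow y t), height (flow y t)) = p"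
    using p by (simp add: projection_flow height_flow)
  ultimately show "p \<in> (\<lambda>x. (projection x, height x)) ` {x \<in> S. P (height x)}"
    by force
qed

lemma level_in_closure:
  assumes x: "x \<in> S" "height x = 0" and side: "\<And>t. t \<in> T \<Longrightarrow> P t" and "0 \<in> closure T"
  shows "x \<in> closure {y \<in> S. P (height y)}"
proof -
  have "continuous_on UNIV (\<lambda>t. (x, t))" "range (\<lambda>t. (x, t)) \<subseteq> S \<times> UNIV"
    using x by (auto intro!: continuous_intros)
  then have "continuous_on UNIV (flow x)"
    using continuous_on_compose2[OF flow_continuous] by fastforce
  moreover have "flow x ` T \<subseteq> closure {y \<in> S. P (height y)}"
    using x side closure_subset by (fastforce simp: flow_in height_flow)
  ultimately have "flow x ` closure T \<subseteq> closure {y \<in> S. P (height y)}"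
    by (intro image_closure_subset) (auto intro: continuous_on_subset)
  then show ?thesis
    using \<open>0 \<in> closure T\<close> x by (auto simp: flow_zero)
qed

lemma closure_negative_inter_closure_positive:
  assumes "closed S"
  shows "closure {x \<in> S. height x < 0} \<inter> closure {x \<in> S. height x > 0}
           = {x \<in> S. height x = 0}"
proof
  have closed_preimage: "closed (S \<inter> height -` T)" if "closed T" for T
    using continuous_closed_preimage[OF height_continuous assms that] .
  have "closure {x \<in> S. height x < 0} \<subseteq> S \<inter> height -` {..0}"
    using closed_preimage[of "{..0}"] by (intro closure_minimal) auto
  moreover have "closure {x \<in> S. height x > 0} \<subseteq> S \<inter> height -` {0..}"
    using closed_preimage[of "{0..}"] by (intro closure_minimal) auto
  ultimately show "closure {x \<in> S. height x < 0} \<inter> closure {x \<in> S. height x > 0}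
               \<subseteq> {x \<in> S. height x = 0}"
    by fastforce
  show "{x \<in> S. height x = 0}
          \<subseteq> closure {x \<in> S. height x < 0} \<inter> closure {x \<in> S. height x > 0}"
    using level_in_closure[of _ "{..<0}" "\<lambda>t. t < 0"]
          level_in_closure[of _ "{0<..}" "\<lambda>t. t > 0"]
    by auto
qed

end

definition odd_even_pairs :: "nat \<Rightarrow> (nat \<times> nat) set" where
  "odd_even_pairs n = {(k, k'). k \<in> {1..n} \<and> odd k \<and> k' \<in> {1..n} \<and> even k'}"

lemma finite_odd_even_pairs: "finite (odd_even_pairs n)"
  by (rule finite_subset[of _ "{1..n} \<times> {1..n}"]) (auto simp: odd_even_pairs_def)

lemma odd_even_pairs_nonempty: "n \<ge> 2 \<Longrightarrow> odd_even_pairs n \<noteq> {}"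
proof -
  assume "n \<ge> 2"
  then have "(1, 2) \<in> odd_even_pairs n"
    by (simp add: odd_even_pairs_def)
  then show ?thesis by auto
qed

lemma tval_eq_Min_image:
  "tval n x = Min ((\<lambda>(k, k'). x k - x k') ` odd_even_pairs n)"
  unfolding tval_def odd_even_pairs_def by (rule arg_cong[of _ _ Min]) auto

lemma continuous_on_Min_image:
  fixes f :: "'b \<Rightarrow> 'a::topological_space \<Rightarrow> real"
  assumes "finite P" "P \<noteq> {}" "\<And>p. p \<in> P \<Longrightarrow> continuous_on S (f p)"
  shows "continuous_on S (\<lambda>x. Min ((\<lambda>p. f p x) ` P))"
  using assms
proof (induction P rule: finite_ne_induct)
  case (insert p P)
  then have "continuous_on S (\<lambda>x. min (f p x) (Min ((\<lambda>p. f p x) ` P)))"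
    by (intro continuous_on_min) auto
  with insert show ?case by simp
qed simp

lemma coordinate_continuous: "continuous_on S (\<lambda>x::nat \<Rightarrow> real. x k)"
  by (rule continuous_on_subset[OF continuous_on_product_coordinates]) simp

lemma tval_continuous: "continuous_on S (tval n)"
proof (cases "odd_even_pairs n = {}")
  case True
  then show ?thesis by (simp add: tval_eq_Min_image)
next
  case False
  have "continuous_on S (\<lambda>x. Min ((\<lambda>p. x (fst p) - x (snd p)) ` odd_even_pairs n))"
    using finite_odd_even_pairs False
    by (intro continuous_on_Min_image continuous_intros coordinate_continuous)
  then show ?thesis
    by (simp add: tval_eq_Min_image split_beta)
qed

lemma Rn_closed: "closed (Rn n)"
proof -
  have "Rn n = (\<Inter>k \<in> - {1..n}. {x. x k = 0})"
    by (auto simp: Rn_def)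
  moreover have "closed {x :: nat \<Rightarrow> real. x k = 0}" for k
    by (intro closed_Collect_eq continuous_on_product_coordinates continuous_on_const)
  ultimately show ?thesis by auto
qed

definition odd_indicator :: "nat \<Rightarrow> nat \<Rightarrow> real" where
  "odd_indicator n k = (if k \<in> {1..n} \<and> odd k then 1 else 0)"

text \<open>Translating by c e raises t by c, because it raises every odd-minus-even
  difference by c.\<close>

lemma tval_translate:
  assumes "n \<ge> 2"
  shows "tval n (\<lambda>k. x k + c * odd_indicator n k) = tval n x + c"
proof -
  let ?D = "(\<lambda>(k, k'). x k - x k') ` odd_even_pairs n"
  have "(\<lambda>(k, k'). (x k + c * odd_indicator n k) - (x k' + c * odd_indicator n k'))
          ` odd_even_pairs n = (\<lambda>d. d + c) ` ?D"
    unfolding image_image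
    by (rule image_cong) (auto simp: odd_even_pairs_def odd_indicator_def)
  moreover have "Min ((\<lambda>d. d + c) ` ?D) = Min ?D + c"
    using finite_odd_even_pairs odd_even_pairs_nonempty[OF assms]
    by (intro mono_Min_commute[symmetric]) (auto simp: mono_def)
  ultimately show ?thesis
    by (simp add: tval_eq_Min_image)
qed

lemma translation_unit_speed_flow:
  assumes "n \<ge> 2"
  shows "unit_speed_flow (Rn n) (\<lambda>x c k. x k + c * odd_indicator n k) (tval n)"
proof
  show "continuous_on (Rn n \<times> UNIV) (\<lambda>(x, c). \<lambda>k. x k + c * odd_indicator n k)"
    unfolding split_beta
    by (intro continuous_intros
        continuous_on_product_then_coordinatewise[OF continuous_on_fst[OF continuous_on_id]])
  show "tval n (\<lambda>k. x k + t * odd_indicator n k) = tval n x + t" for x t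
    by (rule tval_translate[OF assms])
qed (auto simp: Rn_def odd_indicator_def tval_continuous algebra_simps)

theorem lemma1p9:
  fixes n :: nat
  assumes "n \<ge> 2"
  shows "(\<exists>g h. homeomorphism (Rn n) (level_pts n \<times> (UNIV :: real set)) g h
              \<and> g ` mixed_pts n = level_pts n \<times> {..<0}
              \<and> g ` split_pts n = level_pts n \<times> {0<..})
         \<and> closure (mixed_pts n) \<inter> closure (split_pts n) = level_pts n"
proof -
  interpret unit_speed_flow "Rn n" "\<lambda>x c k. x k + c * odd_indicator n k" "tval n"
    using translation_unit_speed_flow[OF assms] .
  have sets: "level_pts n = {x \<in> Rn n. tval n x = 0}"
    "mixed_pts n = {x \<in> Rn n. tval n x < 0}" "split_pts n = {x \<in> Rn n. tval n x > 0}"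
    "{..<0} = {t::real. t < 0}" "{0<..} = {t::real. t > 0}"
    by (auto simp: level_pts_def mixed_pts_def split_pts_def)
  show ?thesis
    unfolding sets
    using trivialization trivialization_image[of "\<lambda>t. t < 0"]
      trivialization_image[of "\<lambda>t. t > 0"]
      closure_negative_inter_closure_positive[OF Rn_closed]
    by blast
qed

end
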